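(* In the Setting, it is impossible that $r=\sqrt{K^2-\lambda_2V}$ and $s=-\sqrt{K^2-\lambda_2V}$.
   Context: Setting: $\Gamma$ is a primitive strongly regular graph with parameters $(v,k,\lambda,\mu)$ (a $k$-regular graph on $v$ vertices, any two adjacent vertices having $\lambda$ and any two distinct non-adjacent vertices having $\mu$ common neighbours; primitive means $\Gamma$ and its complement are connected), with spectrum $k^1, r^f, s^g$ where $k>r>s$ and exponents are multiplicities. $C$ is a coclique in $\Gamma$ of size $c=\frac{vs}{s-k}$. A $K$-regular graph on $V$ vertices, neither complete nor edgeless, is a divisible design graph with parameters $(V,K,\lambda_1,\lambda_2;m,n)$ if its vertex set can be partitioned into $m$ canonical classes of size $n$ such that two distinct vertices in the same class have exactly $\lambda_1$ common neighbours and two vertices in different classes have exactly $\lambda_2$ common neighbours; it is proper unless $m=1$, $n=1$ or $\lambda_1=\lambda_2$. It is assumed that the subgraph $\Delta$ induced on $V(\Gamma)\setminus C$ is a proper divisible design graph with parameters $(V,K,\lambda_1,\lambda_2;m,n)$. It is known that the eigenvalues of $\Delta$ other than $K$ lie in $\{\pm\sqrt{K-\lambda_1},\pm\sqrt{K^2-\lambda_2V}\}$, and that the spectrum of $\Delta$ is $(k+s)^1, r^{f-c+1}, (r+s)^{c-1}, s^{g-c}$, with $c<g$. *)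

theory Defs
  imports "Jordan_Normal_Form.Char_Poly" "HOL-Library.Disjoint_Sets"
begin

definition simple_graph :: "'a set \<Rightarrow> ('a \<Rightarrow> 'a \<Rightarrow> bool) \<Rightarrow> bool" where
  "simple_graph V E \<longleftrightarrow> finite V \<and> (\<forall>x y. E x y \<longrightarrow> x \<in> V \<and> y \<in> V)
     \<and> (\<forall>x y. E x y \<longrightarrow> E y x) \<and> (\<forall>x. \<not> E x x)"

definition induced :: "('a \<Rightarrow> 'a \<Rightarrow> bool) \<Rightarrow> 'a set \<Rightarrow> 'a \<Rightarrow> 'a \<Rightarrow> bool" where
  "induced E W = (\<lambda>x y. E x y \<and> x \<in> W \<and> y \<in> W)"

definition complement_graph :: "'a set \<Rightarrow> ('a \<Rightarrow> 'a \<Rightarrow> bool) \<Rightarrow> 'a \<Rightarrow> 'a \<Rightarrow> bool" where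
  "complement_graph V E = (\<lambda>x y. x \<in> V \<and> y \<in> V \<and> x \<noteq> y \<and> \<not> E x y)"

definition graph_connected :: "'a set \<Rightarrow> ('a \<Rightarrow> 'a \<Rightarrow> bool) \<Rightarrow> bool" where
  "graph_connected V E \<longleftrightarrow> (\<forall>x\<in>V. \<forall>y\<in>V. (induced E V)\<^sup>*\<^sup>* x y)"

definition degree :: "'a set \<Rightarrow> ('a \<Rightarrow> 'a \<Rightarrow> bool) \<Rightarrow> 'a \<Rightarrow> nat" where
  "degree V E x = card {y \<in> V. E x y}"

definition common_nbrs :: "'a set \<Rightarrow> ('a \<Rightarrow> 'a \<Rightarrow> bool) \<Rightarrow> 'a \<Rightarrow> 'a \<Rightarrow> nat" where
  "common_nbrs V E x y = card {z \<in> V. E x z \<and> E y z}"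

definition strongly_regular ::
  "'a set \<Rightarrow> ('a \<Rightarrow> 'a \<Rightarrow> bool) \<Rightarrow> nat \<Rightarrow> nat \<Rightarrow> nat \<Rightarrow> nat \<Rightarrow> bool" where
  "strongly_regular V E v k lam mu \<longleftrightarrow> simple_graph V E \<and> card V = v
     \<and> (\<forall>x\<in>V. degree V E x = k)
     \<and> (\<forall>x\<in>V. \<forall>y\<in>V. E x y \<longrightarrow> common_nbrs V E x y = lam)
     \<and> (\<forall>x\<in>V. \<forall>y\<in>V. x \<noteq> y \<and> \<not> E x y \<longrightarrow> common_nbrs V E x y = mu)"

definition primitive_graph :: "'a set \<Rightarrow> ('a \<Rightarrow> 'a \<Rightarrow> bool) \<Rightarrow> bool" where
  "primitive_graph V E \<longleftrightarrow> graph_connected V E \<and> graph_connected V (complement_graph V E)"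

definition coclique :: "'a set \<Rightarrow> ('a \<Rightarrow> 'a \<Rightarrow> bool) \<Rightarrow> 'a set \<Rightarrow> bool" where
  "coclique V E C \<longleftrightarrow> C \<subseteq> V \<and> (\<forall>x\<in>C. \<forall>y\<in>C. \<not> E x y)"

text \<open>Adjacency matrix w.r.t. the sorted enumeration of the vertex set (the spectrum
  does not depend on the enumeration).\<close>
definition adj_matrix :: "'a::linorder set \<Rightarrow> ('a \<Rightarrow> 'a \<Rightarrow> bool) \<Rightarrow> real mat" where
  "adj_matrix V E = (let xs = sorted_list_of_set V in
     mat (length xs) (length xs) (\<lambda>(i,j). if E (xs ! i) (xs ! j) then 1 else 0))"

definition spectrum_graph :: "'a::linorder set \<Rightarrow> ('a \<Rightarrow> 'a \<Rightarrow> bool) \<Rightarrow> real multiset" where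
  "spectrum_graph V E = proots (char_poly (adj_matrix V E))"

definition divisible_design_graph ::
  "'a set \<Rightarrow> ('a \<Rightarrow> 'a \<Rightarrow> bool) \<Rightarrow> nat \<Rightarrow> nat \<Rightarrow> nat \<Rightarrow> nat \<Rightarrow> nat \<Rightarrow> nat \<Rightarrow> bool" where
  "divisible_design_graph W E Vn K l1 l2 m n \<longleftrightarrow> simple_graph W E \<and> card W = Vn
     \<and> (\<forall>x\<in>W. degree W E x = K)
     \<and> (\<exists>x\<in>W. \<exists>y\<in>W. x \<noteq> y \<and> \<not> E x y)
     \<and> (\<exists>x\<in>W. \<exists>y\<in>W. E x y)
     \<and> (\<exists>P. partition_on W P \<and> card P = m \<and> (\<forall>B\<in>P. card B = n)
          \<and> (\<forall>B\<in>P. \<forall>x\<in>B. \<forall>y\<in>B. x \<noteq> y \<longrightarrow> common_nbrs W E x y = l1)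
          \<and> (\<forall>B\<in>P. \<forall>B'\<in>P. B \<noteq> B' \<longrightarrow> (\<forall>x\<in>B. \<forall>y\<in>B'. common_nbrs W E x y = l2)))"

definition proper_ddg ::
  "'a set \<Rightarrow> ('a \<Rightarrow> 'a \<Rightarrow> bool) \<Rightarrow> nat \<Rightarrow> nat \<Rightarrow> nat \<Rightarrow> nat \<Rightarrow> nat \<Rightarrow> nat \<Rightarrow> bool" where
  "proper_ddg W E Vn K l1 l2 m n \<longleftrightarrow> divisible_design_graph W E Vn K l1 l2 m n
     \<and> m \<noteq> 1 \<and> n \<noteq> 1 \<and> l1 \<noteq> l2"

end

theory Submission
  imports Defs
begin

text \<open>Write \<open>t\<close> for the common value \<open>r = -s\<close>. Counting the edges between the coclique \<open>C\<close>
  and its complement, and using \<open>|C|(k + t) = v t\<close>, gives \<open>K = k - t\<close>; moreover \<open>|C| \<ge> 2\<close>, so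
  \<open>0 = r + s\<close> is an eigenvalue of \<open>\<Delta>\<close>, which forces \<open>\<surd>(K - \<lambda>\<^sub>1) = 0\<close>. Two vertices of a
  canonical class then have at least \<open>K\<close> common neighbours, so they are non-adjacent twins of
  \<open>\<Delta>\<close>, and \<open>\<mu> \<ge> K\<close>.
  On the strongly regular side, \<open>-t\<close> is a root of \<open>x\<^sup>2 + (\<mu> - \<lambda>) x + (\<mu> - k)\<close>, and the other root
  \<open>\<lambda> - \<mu> + t\<close> is an eigenvalue as well, with eigenvector \<open>(A + t)(e\<^sub>p - e\<^sub>q)\<close> for any
  non-adjacent \<open>p, q\<close>. As the spectrum is \<open>{k, t, -t}\<close>, this root is \<open>t\<close>, so
  \<open>\<lambda> = \<mu> = k - t\<^sup>2\<close>. With \<open>\<mu> \<ge> k - t\<close> this gives \<open>t = 1\<close> and \<open>\<lambda> = k - 1\<close>: any two vertices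
  with a common neighbour are adjacent, contradicting \<open>\<mu> \<ge> 1\<close>.\<close>

lemma bij_betw_nth_sorted_list_of_set:
  "finite V \<Longrightarrow> bij_betw (nth (sorted_list_of_set V)) {..<card V} V"
  by (metis bij_betw_nth distinct_sorted_list_of_set length_sorted_list_of_set
      lessThan_atLeast0 set_sorted_list_of_set)

definition adj_action :: "'a set \<Rightarrow> ('a \<Rightarrow> 'a \<Rightarrow> bool) \<Rightarrow> ('a \<Rightarrow> real) \<Rightarrow> 'a \<Rightarrow> real" where
  "adj_action V E u x = (\<Sum>y\<in>V. if E x y then u y else 0)"

lemma adj_matrix_carrier:
  "finite V \<Longrightarrow> adj_matrix V E \<in> carrier_mat (card V) (card V)"
  by (simp add: adj_matrix_def Let_def)

lemma adj_matrix_mult_vec: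
  assumes "finite V" and "i < card V"
  shows "(adj_matrix V E *\<^sub>v vec (card V) (\<lambda>j. u (sorted_list_of_set V ! j))) $ i
         = adj_action V E u (sorted_list_of_set V ! i)"
proof -
  let ?xs = "sorted_list_of_set V"
  have bij: "bij_betw (nth ?xs) {..<card V} V"
    using assms(1) by (rule bij_betw_nth_sorted_list_of_set)
  have "(adj_matrix V E *\<^sub>v vec (card V) (\<lambda>j. u (?xs ! j))) $ i
        = (\<Sum>j<card V. if E (?xs ! i) (?xs ! j) then u (?xs ! j) else 0)"
    using assms by (auto simp: adj_matrix_def Let_def scalar_prod_def lessThan_atLeast0 intro!: sum.cong)
  also have "\<dots> = adj_action V E u (?xs ! i)"
    unfolding adj_action_def by (rule sum.reindex_bij_betw[OF bij])
  finally show ?thesis .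
qed

lemma in_spectrum_graph_iff:
  assumes "finite V"
  shows "\<theta> \<in># spectrum_graph V E \<longleftrightarrow>
    (\<exists>u. (\<exists>x\<in>V. u x \<noteq> 0) \<and> (\<forall>x\<in>V. adj_action V E u x = \<theta> * u x))"
proof -
  let ?n = "card V" and ?xs = "sorted_list_of_set V" and ?A = "adj_matrix V E"
  have A: "?A \<in> carrier_mat ?n ?n" using assms by (rule adj_matrix_carrier)
  have bij: "bij_betw (nth ?xs) {..<?n} V"
    using assms by (rule bij_betw_nth_sorted_list_of_set)
  have V_conv: "x \<in> V \<longleftrightarrow> (\<exists>i<?n. x = ?xs ! i)" for x
    using bij by (auto simp: bij_betw_def)
  have "char_poly ?A \<noteq> 0" using degree_monic_char_poly[OF A] by auto
  then have "\<theta> \<in># spectrum_graph V E \<longleftrightarrow> (\<exists>v. eigenvector ?A v \<theta>)"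
    unfolding spectrum_graph_def eigenvalue_def[symmetric] eigenvalue_root_char_poly[OF A]
    by simp
  also have "\<dots> \<longleftrightarrow> (\<exists>u. (\<exists>x\<in>V. u x \<noteq> 0) \<and> (\<forall>x\<in>V. adj_action V E u x = \<theta> * u x))"
  proof
    assume "\<exists>v. eigenvector ?A v \<theta>"
    then obtain v where v: "v \<in> carrier_vec ?n" "v \<noteq> 0\<^sub>v ?n" "?A *\<^sub>v v = \<theta> \<cdot>\<^sub>v v"
      using A unfolding eigenvector_def by auto
    define u where "u y = v $ the_inv_into {..<?n} (nth ?xs) y" for y
    have u_nth: "u (?xs ! i) = v $ i" if "i < ?n" for i
      unfolding u_def using that the_inv_into_f_f[OF bij_betw_imp_inj_on[OF bij]] by simp
    have v_eq: "v = vec ?n (\<lambda>j. u (?xs ! j))"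
      using v(1) u_nth by (intro eq_vecI) auto
    show "\<exists>u. (\<exists>x\<in>V. u x \<noteq> 0) \<and> (\<forall>x\<in>V. adj_action V E u x = \<theta> * u x)"
    proof (intro exI conjI)
      obtain i where "i < ?n" "v $ i \<noteq> 0"
        using v(1,2) by (metis carrier_vecD eq_vecI index_zero_vec)
      then show "\<exists>x\<in>V. u x \<noteq> 0" using u_nth V_conv by metis
      show "\<forall>x\<in>V. adj_action V E u x = \<theta> * u x"
        using adj_matrix_mult_vec[OF assms, of _ E u] v(3) v_eq u_nth V_conv
        by (metis index_smult_vec(1) dim_vec)
    qed
  next
    assume "\<exists>u. (\<exists>x\<in>V. u x \<noteq> 0) \<and> (\<forall>x\<in>V. adj_action V E u x = \<theta> * u x)"
    then obtain u x where x: "x \<in> V" "u x \<noteq> 0"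
      and u: "\<forall>x\<in>V. adj_action V E u x = \<theta> * u x" by blast
    define v where "v = vec ?n (\<lambda>j. u (?xs ! j))"
    obtain i where i: "i < ?n" "x = ?xs ! i" using x(1) V_conv by blast
    have "v \<noteq> 0\<^sub>v ?n"
    proof
      assume "v = 0\<^sub>v ?n"
      then have "v $ i = 0" using i by simp
      with i x show False by (simp add: v_def)
    qed
    moreover have "?A *\<^sub>v v = \<theta> \<cdot>\<^sub>v v"
      using adj_matrix_mult_vec[OF assms, of _ E u] u V_conv A
      by (intro eq_vecI) (auto simp: v_def)
    ultimately show "\<exists>v. eigenvector ?A v \<theta>"
      using A unfolding eigenvector_def by (intro exI[of _ v]) (auto simp: v_def)
  qed
  finally show ?thesis .
qed

lemma adj_action_cong:
  "(\<And>y. y \<in> V \<Longrightarrow> f y = g y) \<Longrightarrow> adj_action V E f x = adj_action V E g x"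
  unfolding adj_action_def by (intro sum.cong) auto

lemma adj_action_diff:
  "adj_action V E (\<lambda>y. f y - g y) x = adj_action V E f x - adj_action V E g x"
  unfolding adj_action_def by (simp add: sum_subtractf[symmetric] if_distrib cong: if_cong)

lemma adj_action_scale:
  "adj_action V E (\<lambda>y. c * f y) x = c * adj_action V E f x"
  unfolding adj_action_def by (simp add: sum_distrib_left if_distrib cong: if_cong)

lemma adj_action_indicator:
  assumes "finite V" "p \<in> V"
  shows "adj_action V E (\<lambda>y. if y = p then 1 else 0) x = (if E x p then 1 else 0)"
  unfolding adj_action_def using assms
  by (subst sum.cong[OF refl, of _ _ "\<lambda>y. if y = p then (if E x p then 1 else 0) else 0"]) auto

lemma regular_sum_adj_action:
  assumes "simple_graph V E" "\<forall>x\<in>V. degree V E x = k"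
  shows "(\<Sum>x\<in>V. adj_action V E u x) = real k * sum u V"
proof -
  have fin: "finite V" and sym: "\<And>x y. E x y \<Longrightarrow> E y x"
    using assms(1) unfolding simple_graph_def by auto
  have "(\<Sum>x\<in>V. adj_action V E u x) = (\<Sum>y\<in>V. \<Sum>x\<in>V. if E y x then u y else 0)"
    unfolding adj_action_def by (subst sum.swap) (auto intro!: sum.cong dest: sym)
  also have "\<dots> = (\<Sum>y\<in>V. real (degree V E y) * u y)"
    using fin by (simp add: degree_def sum.If_cases Int_def)
  finally show ?thesis
    using assms(2) by (simp add: sum_distrib_left mult.commute)
qed

lemma srg_common_nbrs:
  assumes "strongly_regular V E v k lam mu" "x \<in> V" "y \<in> V"
  shows "common_nbrs V E x y = (if x = y then k else if E x y then lam else mu)"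
  using assms unfolding strongly_regular_def degree_def common_nbrs_def by auto

lemma srg_adj_action_square:
  assumes srg: "strongly_regular V E v k lam mu" and x: "x \<in> V"
  shows "adj_action V E (adj_action V E u) x
    = real mu * sum u V + (real k - real mu) * u x + (real lam - real mu) * adj_action V E u x"
proof -
  have fin: "finite V" and sym: "\<And>x y. E x y \<Longrightarrow> E y x" and irr: "\<And>x. \<not> E x x"
    using srg unfolding strongly_regular_def simple_graph_def by auto
  have "adj_action V E (adj_action V E u) x = (\<Sum>y\<in>V. \<Sum>z\<in>V. if E x z \<and> E y z then u y else 0)"
  proof -
    have "adj_action V E (adj_action V E u) x = (\<Sum>z\<in>V. \<Sum>y\<in>V. if E x z \<and> E z y then u y else 0)"
      unfolding adj_action_def by (intro sum.cong) auto
    also have "\<dots> = (\<Sum>y\<in>V. \<Sum>z\<in>V. if E x z \<and> E y z then u y else 0)"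
      by (subst sum.swap) (auto intro!: sum.cong dest: sym)
    finally show ?thesis .
  qed
  also have "\<dots> = (\<Sum>y\<in>V. real (common_nbrs V E x y) * u y)"
    using fin by (simp add: common_nbrs_def sum.If_cases Int_def)
  also have "\<dots> = (\<Sum>y\<in>V. real mu * u y + (if y = x then (real k - real mu) * u y else 0)
                              + (real lam - real mu) * (if E x y then u y else 0))"
    using srg_common_nbrs[OF srg x] irr by (intro sum.cong) (auto simp: algebra_simps)
  also have "\<dots> = real mu * sum u V + (real k - real mu) * u x + (real lam - real mu) * adj_action V E u x"
    using fin x by (simp add: sum.distrib sum_distrib_left adj_action_def)
  finally show ?thesis .
qed

lemma srg_eigenvalue_quadratic:
  assumes srg: "strongly_regular V E v k lam mu"
    and \<theta>: "\<theta> \<in># spectrum_graph V E" and \<theta>_ne_k: "\<theta> \<noteq> real k"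
  shows "\<theta>\<^sup>2 + (real mu - real lam) * \<theta> + (real mu - real k) = 0"
proof -
  have sg: "simple_graph V E" and deg: "\<forall>x\<in>V. degree V E x = k" and fin: "finite V"
    using srg unfolding strongly_regular_def simple_graph_def by auto
  obtain u x where x: "x \<in> V" "u x \<noteq> 0" and u: "\<forall>x\<in>V. adj_action V E u x = \<theta> * u x"
    using \<theta> in_spectrum_graph_iff[OF fin] by blast
  have "\<theta> * sum u V = real k * sum u V"
    using regular_sum_adj_action[OF sg deg, of u] u by (simp add: sum_distrib_left)
  then have sum_u: "sum u V = 0" using \<theta>_ne_k by simp
  have "\<theta>\<^sup>2 * u x = adj_action V E (adj_action V E u) x"
    using u x by (simp add: adj_action_cong[of V "adj_action V E u"] adj_action_scale power2_eq_square)
  also have "\<dots> = (real k - real mu) * u x + (real lam - real mu) * \<theta> * u x"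
    using srg_adj_action_square[OF srg x(1)] sum_u u x(1) by simp
  finally have "(\<theta>\<^sup>2 + (real mu - real lam) * \<theta> + (real mu - real k)) * u x = 0"
    by (simp add: algebra_simps)
  then show ?thesis using x(2) by simp
qed

lemma srg_other_root_in_spectrum:
  assumes srg: "strongly_regular V E v k lam mu"
    and pq: "p \<in> V" "q \<in> V" "p \<noteq> q" "\<not> E p q"
    and s: "s \<noteq> 0" "s\<^sup>2 + (real mu - real lam) * s + (real mu - real k) = 0"
  shows "real lam - real mu - s \<in># spectrum_graph V E"
proof -
  have fin: "finite V" and irr: "\<And>x. \<not> E x x"
    using srg unfolding strongly_regular_def simple_graph_def by auto
  define e where "e y = (if y = p then 1 else 0) - (if y = q then 1 else (0::real))" for y
  define w where "w y = adj_action V E e y - s * e y" for y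
  have Ae: "adj_action V E e x = (if E x p then 1 else 0) - (if E x q then 1 else 0)" for x
    unfolding e_def adj_action_diff adj_action_indicator[OF fin pq(1)] adj_action_indicator[OF fin pq(2)] ..
  have "sum e V = 0" using fin pq by (simp add: e_def sum_subtractf)
  then have AAe: "adj_action V E (adj_action V E e) x
      = (s\<^sup>2 - (real lam - real mu) * s) * e x + (real lam - real mu) * adj_action V E e x"
    if "x \<in> V" for x
  proof -
    have "real k - real mu = s\<^sup>2 - (real lam - real mu) * s"
      using s(2) by (simp add: algebra_simps)
    then show ?thesis using srg_adj_action_square[OF srg that, of e] \<open>sum e V = 0\<close> by simp
  qed
  have "adj_action V E w x = (real lam - real mu - s) * w x" if "x \<in> V" for x
    unfolding w_def adj_action_diff adj_action_scale AAe[OF that]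
    by (simp add: algebra_simps power2_eq_square)
  moreover have "w p \<noteq> 0"
    using s(1) pq irr by (simp add: w_def Ae e_def)
  ultimately show ?thesis
    using pq(1) in_spectrum_graph_iff[OF fin] by blast
qed

lemma srg_symmetric_spectrum_parameters:
  assumes srg: "strongly_regular V E v k lam mu"
    and spec: "set_mset (spectrum_graph V E) \<subseteq> {real k, t, - t}"
    and minus_t: "- t \<in># spectrum_graph V E"
    and t: "1 \<le> t" and mu: "1 \<le> mu"
    and pq: "p \<in> V" "q \<in> V" "p \<noteq> q" "\<not> E p q"
  shows "lam = mu" and "real mu = real k - t\<^sup>2"
proof -
  have fin: "finite V" and deg: "\<forall>x\<in>V. degree V E x = k"
    using srg unfolding strongly_regular_def simple_graph_def by auto
  have "common_nbrs V E p q \<le> degree V E p"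
    unfolding common_nbrs_def degree_def using fin by (intro card_mono) auto
  then have mu_k: "mu \<le> k" using srg_common_nbrs[OF srg pq(1,2)] deg pq by simp
  have quad: "t\<^sup>2 - (real mu - real lam) * t + (real mu - real k) = 0"
    using srg_eigenvalue_quadratic[OF srg minus_t] t by simp
  have "real lam - real mu + t \<in># spectrum_graph V E"
    using srg_other_root_in_spectrum[OF srg pq, of "- t"] quad t by simp
  moreover have "real lam - real mu + t \<noteq> real k"
  proof
    assume "real lam - real mu + t = real k"
    then have lam_eq: "real lam = real k + real mu - t" by simp
    have "real mu = real k - real k * t"
      using quad unfolding lam_eq by (simp add: algebra_simps power2_eq_square)
    moreover have "real k \<le> real k * t" using mult_left_mono[OF t, of "real k"] by simp
    ultimately show False using mu by simp
  qed
  moreover have "real lam - real mu + t \<noteq> - t"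
  proof
    assume "real lam - real mu + t = - t"
    then have lam_eq: "real lam = real mu - 2 * t" by simp
    have "real mu = real k + t\<^sup>2"
      using quad unfolding lam_eq by (simp add: algebra_simps power2_eq_square)
    moreover have "0 < t\<^sup>2" using t by simp
    ultimately show False using mu_k by linarith
  qed
  ultimately have "real lam - real mu + t = t" using spec by auto
  then show "lam = mu" by simp
  then show "real mu = real k - t\<^sup>2" using quad by simp
qed

lemma srg_mu_eq_zero_if_lam_plus_one_eq_k:
  assumes srg: "strongly_regular V E v k lam mu" and lam: "lam + 1 = k"
    and pq: "p \<in> V" "q \<in> V" "p \<noteq> q" "\<not> E p q"
  shows "mu = 0"
proof (rule ccontr)
  have fin: "finite V" and sym: "\<And>x y. E x y \<Longrightarrow> E y x" and irr: "\<And>x. \<not> E x x"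
    and deg: "\<forall>x\<in>V. degree V E x = k"
    using srg unfolding strongly_regular_def simple_graph_def by auto
  assume "mu \<noteq> 0"
  then have "common_nbrs V E p q \<noteq> 0" using srg_common_nbrs[OF srg pq(1,2)] pq by simp
  then obtain w where w: "w \<in> V" "E p w" "E q w"
    unfolding common_nbrs_def by (metis (no_types, lifting) card.empty empty_Collect_eq)
  have "{z\<in>V. E w z \<and> E p z} \<subseteq> {z\<in>V. E w z} - {p}" using irr by auto
  moreover have "card ({z\<in>V. E w z} - {p}) = card {z\<in>V. E w z \<and> E p z}"
    using srg_common_nbrs[OF srg w(1) pq(1)] deg w pq(1) lam sym irr fin
    unfolding degree_def common_nbrs_def by (auto simp: card_Diff_singleton)
  ultimately have "{z\<in>V. E w z \<and> E p z} = {z\<in>V. E w z} - {p}"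
    using fin by (intro card_subset_eq) auto
  then have "E p q" using w pq sym by blast
  with pq(4) show False ..
qed

lemma sum_card_filter_swap:
  assumes "finite A" "finite B"
  shows "(\<Sum>x\<in>A. card {y\<in>B. R x y}) = (\<Sum>y\<in>B. card {x\<in>A. R x y})"
proof -
  have "(\<Sum>x\<in>A. card {y\<in>B. R x y}) = (\<Sum>x\<in>A. \<Sum>y\<in>B. if R x y then 1 else 0)"
    using assms by (simp add: sum.If_cases Int_def)
  also have "\<dots> = (\<Sum>y\<in>B. \<Sum>x\<in>A. if R x y then 1 else 0)" by (rule sum.swap)
  also have "\<dots> = (\<Sum>y\<in>B. card {x\<in>A. R x y})"
    using assms by (simp add: sum.If_cases Int_def)
  finally show ?thesis .
qed

lemma coclique_edge_count:
  assumes sg: "simple_graph V E" and deg: "\<forall>x\<in>V. degree V E x = k"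
    and C: "coclique V E C" and degW: "\<forall>x\<in>V - C. degree (V - C) (induced E (V - C)) x = K"
  shows "card C * k + card (V - C) * K = card (V - C) * k"
proof -
  let ?W = "V - C"
  have fin: "finite V" and sym: "\<And>x y. E x y \<Longrightarrow> E y x" and inV: "\<And>x y. E x y \<Longrightarrow> y \<in> V"
    using sg unfolding simple_graph_def by auto
  have CV: "C \<subseteq> V" and Cco: "\<And>x y. x \<in> C \<Longrightarrow> y \<in> C \<Longrightarrow> \<not> E x y"
    using C unfolding coclique_def by auto
  have finC: "finite C" using fin CV finite_subset by blast
  have nbrs_C: "card {x\<in>?W. E u x} = k" if "u \<in> C" for u
  proof -
    have "{x\<in>?W. E u x} = {x\<in>V. E u x}" using that Cco inV by auto
    then show ?thesis using deg that CV unfolding degree_def by auto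
  qed
  have nbrs_W: "card {u\<in>C. E u x} + K = k" if "x \<in> ?W" for x
  proof -
    have "{y\<in>V. E x y} = {y\<in>C. E x y} \<union> {y\<in>?W. E x y}" using CV by auto
    then have "degree V E x = card {y\<in>C. E x y} + card {y\<in>?W. E x y}"
      unfolding degree_def using fin finC by (subst card_Un_disjoint[symmetric]) auto
    moreover have "card {y\<in>?W. E x y} = K"
      using degW that unfolding degree_def induced_def by (auto cong: conj_cong)
    moreover have "{u\<in>C. E u x} = {y\<in>C. E x y}" using sym by auto
    ultimately show ?thesis using deg that by auto
  qed
  have "card C * k = (\<Sum>u\<in>C. card {x\<in>?W. E u x})" using nbrs_C by simp
  also have "\<dots> = (\<Sum>x\<in>?W. card {u\<in>C. E u x})" using fin finC by (intro sum_card_filter_swap) auto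
  finally have "card C * k + card ?W * K = (\<Sum>x\<in>?W. card {u\<in>C. E u x} + K)"
    by (simp add: sum.distrib)
  also have "\<dots> = card ?W * k" using nbrs_W by simp
  finally show ?thesis .
qed

lemma coclique_complement_degree:
  assumes sg: "simple_graph V E" and deg: "\<forall>x\<in>V. degree V E x = k"
    and C: "coclique V E C" and degW: "\<forall>x\<in>V - C. degree (V - C) (induced E (V - C)) x = K"
    and W: "V - C \<noteq> {}"
    and card_C: "real (card C) * (real k + t) = real (card V) * t"
  shows "real K = real k - t" and "real (card C) * real k = real (card (V - C)) * t"
proof -
  have fin: "finite V" and CV: "C \<subseteq> V"
    using sg C unfolding simple_graph_def coclique_def by auto
  have "card V = card (V - C) + card C"
    using fin CV by (metis card_Diff_subset card_mono finite_subset le_add_diff_inverse2)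
  then show C_k: "real (card C) * real k = real (card (V - C)) * t"
    using card_C by (simp add: algebra_simps)
  have "real (card C) * real k + real (card (V - C)) * real K = real (card (V - C)) * real k"
    using coclique_edge_count[OF sg deg C degW] by (metis of_nat_add of_nat_mult)
  then have "real (card (V - C)) * (real K - (real k - t)) = 0"
    using C_k by (simp add: algebra_simps)
  moreover have "card (V - C) \<noteq> 0" using W fin by simp
  ultimately show "real K = real k - t" by simp
qed

lemma degree_add_two_le_card:
  assumes "simple_graph V E" "x \<in> V" "z \<in> V" "x \<noteq> z" "\<not> E x z"
  shows "degree V E x + 2 \<le> card V"
proof -
  have fin: "finite V" and irr: "\<not> E x x" using assms(1) unfolding simple_graph_def by auto
  have "{y\<in>V. E x y} \<subseteq> V - {x, z}" using irr assms(5) by auto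
  then have "degree V E x \<le> card (V - {x, z})"
    unfolding degree_def using fin by (intro card_mono) auto
  also have "\<dots> = card V - 2" using assms(2-4) fin by (simp add: card_Diff_subset)
  finally have "degree V E x \<le> card V - 2" .
  moreover have "2 \<le> card V"
    using card_mono[OF fin, of "{x, z}"] assms(2-4) by simp
  ultimately show ?thesis by linarith
qed

lemma two_le_card_of_degree_balance:
  assumes sg: "simple_graph V E" and deg: "\<forall>x\<in>V. degree V E x = k" and CV: "C \<subseteq> V"
    and xz: "x \<in> V - C" "z \<in> V - C" "x \<noteq> z" "\<not> E x z"
    and C_k: "real (card C) * real k = real (card (V - C)) * t" and t: "1 \<le> t"
  shows "2 \<le> card C"
proof (rule ccontr)
  have fin: "finite V" using sg unfolding simple_graph_def by auto
  have k: "k + 2 \<le> card V"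
    using degree_add_two_le_card[OF sg, of x z] xz deg by auto
  have card_V: "card (V - C) = card V - card C"
    using fin CV by (simp add: card_Diff_subset finite_subset)
  assume "\<not> 2 \<le> card C"
  then consider "card C = 0" | "card C = 1" by linarith
  then show False
  proof cases
    case 1
    then show ?thesis using C_k card_V t k by simp
  next
    case 2
    then have "real k = (real (card V) - 1) * t" using C_k card_V k by simp
    moreover have "real (card V) - 1 \<le> (real (card V) - 1) * t"
      using mult_left_mono[OF t, of "real (card V) - 1"] k by simp
    moreover have "real k + 2 \<le> real (card V)" using k by linarith
    ultimately show ?thesis by linarith
  qed
qed

lemma common_nbrs_induced_le:
  assumes "finite V" "W \<subseteq> V"
  shows "common_nbrs W (induced E W) x y \<le> common_nbrs V E x y"
  unfolding common_nbrs_def induced_def using assms by (intro card_mono) auto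

lemma common_nbrs_le_degree_not_adjacent:
  assumes sg: "simple_graph V E" and "x \<in> V" "y \<in> V" "x \<noteq> y"
    and le: "degree V E x \<le> common_nbrs V E x y"
  shows "\<not> E x y"
proof
  have fin: "finite V" and irr: "\<not> E y y" using sg unfolding simple_graph_def by auto
  have "{z\<in>V. E x z \<and> E y z} = {z\<in>V. E x z}"
    using le fin unfolding degree_def common_nbrs_def by (intro card_seteq) auto
  moreover assume "E x y"
  ultimately show False using \<open>y \<in> V\<close> irr by blast
qed

lemma divisible_design_graph_degree_pos:
  assumes "divisible_design_graph W E Vn K l1 l2 m n"
  shows "0 < K"
proof -
  have sg: "simple_graph W E" and deg: "\<forall>x\<in>W. degree W E x = K" and "\<exists>x\<in>W. \<exists>y\<in>W. E x y"
    using assms unfolding divisible_design_graph_def by auto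
  then obtain x where x: "x \<in> W" "{y\<in>W. E x y} \<noteq> {}" by blast
  moreover have "finite W" using sg unfolding simple_graph_def by auto
  ultimately have "card {y\<in>W. E x y} \<noteq> 0" by simp
  then show ?thesis using deg x(1) unfolding degree_def by simp
qed

lemma ddg_nonadjacent_pair:
  assumes ddg: "divisible_design_graph W E Vn K l1 l2 m n" and n: "n \<noteq> 1" and K: "K \<le> l1"
  obtains x y where "x \<in> W" "y \<in> W" "x \<noteq> y" "\<not> E x y" "common_nbrs W E x y = l1"
proof -
  have sg: "simple_graph W E" and deg: "\<forall>x\<in>W. degree W E x = K" and "W \<noteq> {}"
    using ddg unfolding divisible_design_graph_def by auto
  obtain P where P: "partition_on W P" "\<forall>B\<in>P. card B = n"
    and l1: "\<forall>B\<in>P. \<forall>x\<in>B. \<forall>y\<in>B. x \<noteq> y \<longrightarrow> common_nbrs W E x y = l1"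
    using ddg unfolding divisible_design_graph_def by auto
  obtain B x where B: "B \<in> P" "x \<in> B"
    using P(1) \<open>W \<noteq> {}\<close> unfolding partition_on_def by blast
  have "finite B" "B \<subseteq> W"
    using sg P(1) B(1) unfolding simple_graph_def partition_on_def by (auto intro: finite_subset)
  then have "B \<noteq> {x}" using P(2) B n by auto
  then obtain y where y: "y \<in> B" "y \<noteq> x" using B(2) by blast
  have xy: "x \<in> W" "y \<in> W" "common_nbrs W E x y = l1"
    using B y l1 \<open>B \<subseteq> W\<close> by auto
  show ?thesis
  proof (rule that[OF xy(1,2) y(2)[symmetric] _ xy(3)])
    show "\<not> E x y"
      using common_nbrs_le_degree_not_adjacent[OF sg xy(1,2)] y deg xy K by auto
  qed
qed

lemma sqrt_of_int_ge_one: "0 < sqrt (real_of_int z) \<Longrightarrow> 1 \<le> sqrt (real_of_int z)"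
  by simp

theorem mainTheorem7:
  fixes V :: "'a::linorder set" and E :: "'a \<Rightarrow> 'a \<Rightarrow> bool" and C :: "'a set"
    and v k lam mu f g :: nat and r s :: real
    and Vn K l1 l2 m n :: nat
  assumes srg: "strongly_regular V E v k lam mu"
    and prim: "primitive_graph V E"
    and spec: "spectrum_graph V E = {#real k#} + replicate_mset f r + replicate_mset g s"
    and order: "real k > r" "r > s"
    and cocl: "coclique V E C"
    and csize: "real (card C) = real v * s / (s - real k)"
    and ddg: "proper_ddg (V - C) (induced E (V - C)) Vn K l1 l2 m n"
    and eig: "\<forall>\<theta>. \<theta> \<in># spectrum_graph (V - C) (induced E (V - C)) \<and> \<theta> \<noteq> real K \<longrightarrow>
               \<theta> \<in> {sqrt (real K - real l1), - sqrt (real K - real l1),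
                     sqrt (real K ^ 2 - real l2 * real Vn), - sqrt (real K ^ 2 - real l2 * real Vn)}"
    and specD: "spectrum_graph (V - C) (induced E (V - C)) =
        {#real k + s#} + replicate_mset (f + 1 - card C) r
        + replicate_mset (card C - 1) (r + s) + replicate_mset (g - card C) s"
    and cg: "card C < g"
  shows "\<not> (r = sqrt (real K ^ 2 - real l2 * real Vn) \<and> s = - sqrt (real K ^ 2 - real l2 * real Vn))"
proof
  define t where "t = sqrt (real K ^ 2 - real l2 * real Vn)"
  assume "r = sqrt (real K ^ 2 - real l2 * real Vn) \<and> s = - sqrt (real K ^ 2 - real l2 * real Vn)"
  then have r: "r = t" and s: "s = - t" unfolding t_def by auto
  have t: "1 \<le> t"
    using order r s sqrt_of_int_ge_one[of "int K ^ 2 - int l2 * int Vn"] unfolding t_def by simp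
  let ?W = "V - C" and ?\<Delta> = "induced E (V - C)"
  have sg: "simple_graph V E" and deg: "\<forall>x\<in>V. degree V E x = k" and "card V = v"
    using srg unfolding strongly_regular_def by auto
  have \<Delta>: "divisible_design_graph ?W ?\<Delta> Vn K l1 l2 m n" and "n \<noteq> 1"
    using ddg unfolding proper_ddg_def by auto
  then have degW: "\<forall>x\<in>?W. degree ?W ?\<Delta> x = K" and "\<exists>x\<in>?W. \<exists>z\<in>?W. x \<noteq> z \<and> \<not> ?\<Delta> x z"
    unfolding divisible_design_graph_def by auto
  then obtain x z where xz: "x \<in> ?W" "z \<in> ?W" "x \<noteq> z" "\<not> E x z"
    unfolding induced_def by blast
  have "real (card C) * (real k + t) = real (card V) * t"
    using csize order s \<open>card V = v\<close> by (simp add: field_simps)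
  moreover have "?W \<noteq> {}" using xz by auto
  ultimately have K: "real K = real k - t" and C_k: "real (card C) * real k = real (card ?W) * t"
    using coclique_complement_degree[OF sg deg cocl degW] by auto
  have "2 \<le> card C"
    using two_le_card_of_degree_balance[OF sg deg _ xz C_k t] cocl unfolding coclique_def by blast
  then have "0 \<in># spectrum_graph ?W ?\<Delta>" using specD r s by simp
  moreover have "0 \<noteq> real K" using divisible_design_graph_degree_pos[OF \<Delta>] by simp
  ultimately have "0 \<in> {sqrt (real K - real l1), - sqrt (real K - real l1), t, - t}"
    by (rule eig[rule_format, OF conjI, folded t_def])
  then have "K \<le> l1" using t by auto
  then obtain p q where pq: "p \<in> ?W" "q \<in> ?W" "p \<noteq> q" "\<not> ?\<Delta> p q"
    and l1: "common_nbrs ?W ?\<Delta> p q = l1"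
    using ddg_nonadjacent_pair[OF \<Delta> \<open>n \<noteq> 1\<close>] by blast
  then have pqV: "p \<in> V" "q \<in> V" "\<not> E p q" unfolding induced_def by auto
  have "K \<le> mu"
    using common_nbrs_induced_le[of V ?W E p q] sg srg_common_nbrs[OF srg pqV(1,2)] pq pqV l1 \<open>K \<le> l1\<close>
    unfolding simple_graph_def by auto
  then have "1 \<le> mu" using divisible_design_graph_degree_pos[OF \<Delta>] by simp
  moreover have "set_mset (spectrum_graph V E) \<subseteq> {real k, t, - t}" "- t \<in># spectrum_graph V E"
    using spec r s cg by auto
  ultimately have "lam = mu" and mu: "real mu = real k - t\<^sup>2"
    using srg_symmetric_spectrum_parameters[OF srg _ _ t _ pqV(1,2) pq(3) pqV(3)] by simp_all
  have "t\<^sup>2 \<le> t" using \<open>K \<le> mu\<close> mu K by simp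
  then have "t = 1" using t by (simp add: power2_eq_square mult_le_cancel_left1)
  then have "lam + 1 = k" and "mu \<noteq> 0" using \<open>lam = mu\<close> mu order r by auto
  then show False using srg_mu_eq_zero_if_lam_plus_one_eq_k[OF srg _ pqV(1,2) pq(3) pqV(3)] by simp
qed

end
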